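(* Let $G=\mathrm{Sl}(2,\mathbb R)$ acting on $\mathbb P^1$, let $W=\{(a,b)\in\mathbb R^2: a\ge0,\ |b|\le a\}$ and $S_W=\{g\in\mathrm{Sl}(2,\mathbb R): gW\subset W\}$. The core of the invariant control set of $S_W$ in $\mathbb P^1$ is $C_0=\{[(a,b)]:(a,b)\in\mathrm{int}W\}$. For $g\in\mathrm{Sl}(2,\mathbb R)$ and $0\ne z\in\mathbb R^2$ let $\rho(g,[z])=\|gz\|/\|z\|$ (Euclidean norm). Then: (i) $\|g(1,0)\|\ge 1/2$ for all $g\in S_W$; (ii) for every $z\in C_0$ there is $h\in S_W$ with $z=h[(1,0)]$ and $\rho(g,z)\ge 1/(2\|h\|)$ for all $g\in S_W$ (where $\|h\|$ is the operator norm), so $\inf_{g\in S_W}\rho(g,z)>0$; (iii) nevertheless $\inf\{\rho(g,z): g\in S_W,\ z\in C_0\}=0$, i.e. no lower bound uniform in $z\in C_0$ exists.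
   Context: Here $\rho(g,[z])=\|gz\|/\|z\|$ is the cocycle $\rho_\lambda$ for $\mathrm{Sl}(2,\mathbb R)$ associated with the functional $\lambda$ on the diagonal subalgebra satisfying $\lambda(\mathrm{diag}(1,-1))=1$. The invariant control set of $S_W$ is the unique maximal subset $D\subset\mathbb P^1$ with nonempty interior, $D\subset\mathrm{cl}(S_Wx)$ for all $x\in D$, and $S_WD\subset D$; its core is the set of its points fixed by some element of $\mathrm{int}S_W$. *)

theory Defs
  imports "HOL-Analysis.Analysis"
begin

definition SL2 :: "(real^2^2) set" where
  "SL2 = {g. det g = 1}"

definition Wcone :: "(real^2) set" where
  "Wcone = {x. x $ 1 \<ge> 0 \<and> \<bar>x $ 2\<bar> \<le> x $ 1}"

definition SW :: "(real^2^2) set" where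
  "SW = {g \<in> SL2. (\<lambda>x. g *v x) ` Wcone \<subseteq> Wcone}"

definition proj :: "real^2 \<Rightarrow> (real^2) set" where
  "proj z = {c *\<^sub>R z | c. c \<noteq> 0}"

definition P1 :: "(real^2) set set" where
  "P1 = {proj z | z. z \<noteq> 0}"

definition P1_top :: "(real^2) set topology" where
  "P1_top = topology (\<lambda>U. U \<subseteq> P1 \<and> open {z. z \<noteq> 0 \<and> proj z \<in> U})"

text \<open>Action of a matrix on P1 (well defined for invertible g).\<close>
definition act :: "real^2^2 \<Rightarrow> (real^2) set \<Rightarrow> (real^2) set" where
  "act g p = (\<lambda>x. g *v x) ` p"

definition orbit :: "(real^2^2) set \<Rightarrow> (real^2) set \<Rightarrow> (real^2) set set" where
  "orbit S p = {act g p | g. g \<in> S}"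

definition ics_candidate :: "(real^2^2) set \<Rightarrow> (real^2) set set \<Rightarrow> bool" where
  "ics_candidate S D \<longleftrightarrow> D \<subseteq> P1 \<and> P1_top interior_of D \<noteq> {}
     \<and> (\<forall>x\<in>D. D \<subseteq> P1_top closure_of (orbit S x))
     \<and> (\<forall>g\<in>S. \<forall>x\<in>D. act g x \<in> D)"

definition invariant_control_set :: "(real^2^2) set \<Rightarrow> (real^2) set set \<Rightarrow> bool" where
  "invariant_control_set S D \<longleftrightarrow> ics_candidate S D
     \<and> (\<forall>D'. ics_candidate S D' \<and> D \<subseteq> D' \<longrightarrow> D' = D)"

definition core :: "(real^2^2) set \<Rightarrow> (real^2) set set \<Rightarrow> (real^2) set set" where
  "core S D = {x \<in> D. \<exists>g \<in> (top_of_set SL2) interior_of S. act g x = x}"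

definition C0 :: "(real^2) set set" where
  "C0 = proj ` interior Wcone"

definition rho :: "real^2^2 \<Rightarrow> real^2 \<Rightarrow> real" where
  "rho g z = norm (g *v z) / norm z"

definition e1 :: "real^2" where
  "e1 = vector [1, 0]"

end

(*
  S_W maps the cone W into itself, and lower triangular and shear elements of S_W carry any
  nonzero vector of W to a positive multiple of any interior vector. Hence every S_W-orbit of a
  point of the closed arc D = P(W) contains the open arc C0, which is dense in D, while every
  orbit in P^1 enters the closed invariant set D; so D is the unique invariant control set.
  Interior points of W are fixed by interior elements of S_W, whereas an element fixing a
  boundary direction can be perturbed by a small shear inside S_W so as to push that direction
  out of W; so the core is C0.

  In the basis (1,1), (1,-1) of the edges of W, det g = 1 and gW in W force g_11 >= 1, so
  |g e1| >= 1; transporting e1 to z by h in S_W gives rho(g, z) >= 1/|h|. The hyperbolic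
  elements diagonal in that basis contract suitable interior directions arbitrarily, so no
  bound uniform in z exists.
*)

theory Submission
  imports Defs
begin

lemma matrix_vector_mult_nth_2:
  "((A::real^2^2) *v x) $ 1 = A$1$1 * x$1 + A$1$2 * x$2"
  "((A::real^2^2) *v x) $ 2 = A$2$1 * x$1 + A$2$2 * x$2"
  by (simp_all add: matrix_vector_mult_def sum_2)

lemma vec2_eq_iff: "(x::real^2) = y \<longleftrightarrow> x$1 = y$1 \<and> x$2 = y$2"
  by (simp add: vec_eq_iff forall_2)

lemma e1_nth [simp]: "e1$1 = 1" "e1$2 = 0"
  by (simp_all add: e1_def)

lemma norm_e1 [simp]: "norm e1 = 1"
  by (simp add: e1_def norm_vec_def L2_set_def sum_2)

definition mat2 :: "real \<Rightarrow> real \<Rightarrow> real \<Rightarrow> real \<Rightarrow> real^2^2" where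
  "mat2 a b c d = vector [vector [a, b], vector [c, d]]"

lemma mat2_nth [simp]:
  "mat2 a b c d $1$1 = a" "mat2 a b c d $1$2 = b"
  "mat2 a b c d $2$1 = c" "mat2 a b c d $2$2 = d"
  by (simp_all add: mat2_def)

lemma det_mat2 [simp]: "det (mat2 a b c d) = a * d - b * c"
  by (simp add: det_2)

lemma mat2_mult_vector: "mat2 a b c d *v x = vector [a * x$1 + b * x$2, c * x$1 + d * x$2]"
  by (simp add: vec2_eq_iff matrix_vector_mult_nth_2)

lemma matrix_vector_mult_eq_0_imp:
  fixes g :: "'a::field^'n^'n"
  assumes "det g \<noteq> 0" "g *v y = 0"
  shows "y = 0"
  using assms by (meson invertible_det_nz invertible_def matrix_left_invertible_ker)

section \<open>The cone\<close>

lemma Wcone_iff: "x \<in> Wcone \<longleftrightarrow> \<bar>x$2\<bar> \<le> x$1"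
  by (auto simp: Wcone_def)

lemma Wcone_eq_halfspaces:
  "Wcone = {x. vector [-1, 1] \<bullet> x \<le> 0} \<inter> {x. vector [-1, -1] \<bullet> x \<le> (0::real)}"
  by (auto simp: Wcone_iff inner_vec_def sum_2)

lemma interior_Wcone_iff: "x \<in> interior Wcone \<longleftrightarrow> \<bar>x$2\<bar> < x$1"
proof -
  have nz: "vector [- 1, c] \<noteq> (0::real^2)" for c
    by (simp add: vec2_eq_iff)
  have "interior Wcone = {x. vector [-1, 1] \<bullet> x < 0} \<inter> {x. vector [-1, -1] \<bullet> x < (0::real)}"
    unfolding Wcone_eq_halfspaces interior_Int by (simp only: interior_halfspace_le[OF nz])
  moreover have "vector [-1, c] \<bullet> x = c * x$2 - x$1" for c :: real
    by (simp add: inner_vec_def sum_2)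
  ultimately show ?thesis
    by auto
qed

lemma closed_Wcone: "closed Wcone"
  by (simp add: Wcone_eq_halfspaces closed_Int closed_halfspace_le)

lemma Wcone_nonneg_comb:
  assumes "p \<in> Wcone" "q \<in> Wcone" "a \<ge> 0" "b \<ge> 0"
  shows "a *\<^sub>R p + b *\<^sub>R q \<in> Wcone"
proof -
  have "\<bar>a * p$2 + b * q$2\<bar> \<le> a * \<bar>p$2\<bar> + b * \<bar>q$2\<bar>"
    using assms by (metis abs_mult abs_of_nonneg abs_triangle_ineq)
  also have "\<dots> \<le> a * p$1 + b * q$1"
    using assms by (intro add_mono mult_left_mono) (auto simp: Wcone_iff)
  finally show ?thesis
    by (simp add: Wcone_iff)
qed

lemma convex_Wcone: "convex Wcone"
  by (auto simp: convex_def Wcone_nonneg_comb)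

lemma Wcone_scaleR: "z \<in> Wcone \<Longrightarrow> c \<ge> 0 \<Longrightarrow> c *\<^sub>R z \<in> Wcone"
  using Wcone_nonneg_comb[of z z c 0] by simp

lemma interior_Wcone_scaleR: "z \<in> interior Wcone \<Longrightarrow> c > 0 \<Longrightarrow> c *\<^sub>R z \<in> interior Wcone"
  by (auto simp: interior_Wcone_iff abs_mult)

lemma Wcone_nth_1_pos: "y \<in> Wcone \<Longrightarrow> y \<noteq> 0 \<Longrightarrow> y$1 > 0"
  by (auto simp: Wcone_iff vec2_eq_iff)

lemma zero_notin_interior_Wcone: "0 \<notin> interior Wcone"
  by (simp add: interior_Wcone_iff)

lemma e1_in_interior_Wcone: "e1 \<in> interior Wcone"
  by (simp add: interior_Wcone_iff)

lemma closure_interior_Wcone: "closure (interior Wcone) = Wcone"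
  using convex_closure_interior[OF convex_Wcone] e1_in_interior_Wcone closed_Wcone by auto

section \<open>The compression semigroup\<close>

lemma Wcone_generators_in_Wcone: "vector [1, 1] \<in> Wcone" "vector [1, -1] \<in> Wcone"
  by (simp_all add: Wcone_iff)

lemma vector2_decomp_generators:
  "(x::real^2) = ((x$1 + x$2) / 2) *\<^sub>R vector [1, 1] + ((x$1 - x$2) / 2) *\<^sub>R vector [1, -1]"
  by (simp add: vec2_eq_iff field_simps)

lemma SW_iff_generators:
  "g \<in> SW \<longleftrightarrow> det g = 1 \<and> g *v vector [1, 1] \<in> Wcone \<and> g *v vector [1, -1] \<in> Wcone"
proof
  assume "g \<in> SW"
  then show "det g = 1 \<and> g *v vector [1, 1] \<in> Wcone \<and> g *v vector [1, -1] \<in> Wcone"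
    using Wcone_generators_in_Wcone by (auto simp: SW_def SL2_def)
next
  assume g: "det g = 1 \<and> g *v vector [1, 1] \<in> Wcone \<and> g *v vector [1, -1] \<in> Wcone"
  have "g *v x \<in> Wcone" if "x \<in> Wcone" for x
  proof -
    have "g *v x = ((x$1 + x$2) / 2) *\<^sub>R (g *v vector [1, 1])
        + ((x$1 - x$2) / 2) *\<^sub>R (g *v vector [1, -1])"
      by (subst vector2_decomp_generators) (simp add: matrix_vector_right_distrib matrix_vector_mult_scaleR)
    also have "\<dots> \<in> Wcone"
      using g that by (intro Wcone_nonneg_comb) (auto simp: Wcone_iff)
    finally show ?thesis .
  qed
  then show "g \<in> SW"
    using g by (auto simp: SW_def SL2_def)
qed

lemma mat2_in_SW_iff:
  "mat2 a b c d \<in> SW \<longleftrightarrow> a * d - b * c = 1 \<and> \<bar>c + d\<bar> \<le> a + b \<and> \<bar>c - d\<bar> \<le> a - b"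
  by (simp add: SW_iff_generators mat2_mult_vector Wcone_iff)

lemma SW_iff_mat2: "g \<in> SW \<longleftrightarrow> mat2 (g$1$1) (g$1$2) (g$2$1) (g$2$2) \<in> SW"
proof -
  have "mat2 (g$1$1) (g$1$2) (g$2$1) (g$2$2) = g"
    by (simp add: vec_eq_iff forall_2)
  then show ?thesis by simp
qed

lemma SW_mult: "g \<in> SW \<Longrightarrow> h \<in> SW \<Longrightarrow> g ** h \<in> SW"
  by (auto simp: SW_def SL2_def det_mul matrix_vector_mul_assoc[symmetric] image_subset_iff)

lemma mat_1_in_SW: "mat 1 \<in> SW"
  by (auto simp: SW_def SL2_def)

lemma SW_vector_nonzero: "g \<in> SW \<Longrightarrow> y \<noteq> 0 \<Longrightarrow> g *v y \<noteq> 0"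
  using matrix_vector_mult_eq_0_imp[of g y] by (auto simp: SW_def SL2_def)

lemma SW_maps_into_Wcone_or_negation:
  assumes "y \<noteq> 0"
  obtains g where "g \<in> SW" "g *v y \<in> Wcone \<or> -(g *v y) \<in> Wcone"
proof (cases "y \<in> Wcone \<or> -y \<in> Wcone")
  case True
  then show ?thesis
    using that mat_1_in_SW by fastforce
next
  case False
  define u where "u = y$1 + y$2"
  define v where "v = y$1 - y$2"
  have uv: "u > 0 \<and> v < 0 \<or> u < 0 \<and> v > 0"
    using False by (auto simp: Wcone_iff u_def v_def)
  txt \<open>The shear below fixes the edge \<open>(1, -1)\<close> and moves \<open>y\<close> along it by \<open>t u / 2\<close>;
    \<open>t\<close> is chosen to land on the axis \<open>\<real> e\<^sub>1\<close>.\<close>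
  define t where "t = 1 + \<bar>v\<bar> / \<bar>u\<bar>"
  have "t \<ge> 0"
    by (simp add: t_def)
  then have "mat2 (1 + t/2) (t/2) (-t/2) (1 - t/2) \<in> SW"
    by (auto simp: mat2_in_SW_iff field_simps)
  moreover have "t/2 * u = y$2"
    using uv by (auto simp: t_def u_def v_def field_simps)
  then have "mat2 (1 + t/2) (t/2) (-t/2) (1 - t/2) *v y = vector [u, 0]"
    by (simp add: mat2_mult_vector vec2_eq_iff u_def algebra_simps)
  moreover have "vector [u, 0] \<in> Wcone \<or> - vector [u, 0] \<in> Wcone"
    by (auto simp: Wcone_iff)
  ultimately show ?thesis
    using that by metis
qed

lemma SW_maps_Wcone_to_e1:
  assumes "y \<in> Wcone" "y \<noteq> 0"
  obtains k c where "k \<in> SW" "c > 0" "k *v y = c *\<^sub>R e1"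
proof -
  have y1: "y$1 > 0" and "\<bar>y$2\<bar> \<le> y$1"
    using assms by (auto simp: Wcone_nth_1_pos Wcone_iff)
  define r where "r = y$2 / (2 * y$1)"
  have "\<bar>r\<bar> \<le> 1/2"
    using y1 \<open>\<bar>y$2\<bar> \<le> y$1\<close> by (simp add: r_def abs_div divide_le_eq)
  then have "mat2 2 0 (- r) (1/2) \<in> SW"
    by (auto simp: mat2_in_SW_iff abs_le_iff)
  moreover have "mat2 2 0 (- r) (1/2) *v y = (2 * y$1) *\<^sub>R e1"
    using y1 by (simp add: r_def mat2_mult_vector vec2_eq_iff field_simps)
  moreover have "2 * y$1 > 0"
    using y1 by simp
  ultimately show ?thesis
    using that by blast
qed

lemma lower_triangular_in_SW:
  assumes "a > 0" "1/a \<le> a - \<bar>b\<bar>"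
  shows "mat2 a 0 b (1/a) \<in> SW"
proof -
  have "1/a > 0"
    using assms(1) by simp
  then have "\<bar>b + 1/a\<bar> \<le> a + 0 \<and> \<bar>b - 1/a\<bar> \<le> a - 0"
    using assms(2) by arith
  then show ?thesis
    using assms(1) by (simp add: mat2_in_SW_iff)
qed

lemma SW_maps_e1_to_interior_Wcone:
  assumes "w \<in> interior Wcone"
  obtains h t where "h \<in> SW" "t > 0" "h *v e1 = t *\<^sub>R w"
proof -
  have w1: "w$1 > 0" and w2: "\<bar>w$2\<bar> < w$1"
    using assms by (auto simp: interior_Wcone_iff)
  define a where "a = w$1 * (w$1 - \<bar>w$2\<bar>)"
  have a: "a > 0"
    using w1 w2 by (simp add: a_def)
  define t where "t = 1 + 1/a"
  have t: "t \<ge> 1" "t * a \<ge> 1"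
    using a by (auto simp: t_def algebra_simps)
  then have "t * (t * a) \<ge> 1 * 1"
    by (intro mult_mono) auto
  then have "t * t * a \<ge> 1"
    by (simp add: mult.assoc)
  then have "1 \<le> (t * w$1 - t * \<bar>w$2\<bar>) * (t * w$1)"
    by (simp add: a_def algebra_simps)
  then have "1 / (t * w$1) \<le> t * w$1 - \<bar>t * w$2\<bar>"
    using t w1 by (simp add: divide_le_eq abs_mult)
  then have "mat2 (t * w$1) 0 (t * w$2) (1 / (t * w$1)) \<in> SW"
    using t w1 by (intro lower_triangular_in_SW) auto
  moreover have "mat2 (t * w$1) 0 (t * w$2) (1 / (t * w$1)) *v e1 = t *\<^sub>R w"
    by (simp add: mat2_mult_vector vec2_eq_iff)
  moreover have "t > 0"
    using t(1) by simp
  ultimately show ?thesis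
    using that by blast
qed

lemma SW_maps_Wcone_to_interior_Wcone:
  assumes "y \<in> Wcone" "y \<noteq> 0" "w \<in> interior Wcone"
  obtains g c where "g \<in> SW" "c > 0" "g *v y = c *\<^sub>R w"
proof -
  obtain k c where k: "k \<in> SW" "c > 0" "k *v y = c *\<^sub>R e1"
    using SW_maps_Wcone_to_e1 assms by blast
  obtain h t where h: "h \<in> SW" "t > 0" "h *v e1 = t *\<^sub>R w"
    using SW_maps_e1_to_interior_Wcone assms by blast
  have "(h ** k) *v y = (c * t) *\<^sub>R w"
    using k h by (simp add: matrix_vector_mul_assoc[symmetric] matrix_vector_mult_scaleR)
  moreover have "c * t > 0"
    using k(2) h(2) by simp
  ultimately show ?thesis
    using that SW_mult[OF h(1) k(1)] by blast
qed

section \<open>The projective line\<close>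

lemma mem_proj: "x \<in> proj z \<longleftrightarrow> (\<exists>c. c \<noteq> 0 \<and> x = c *\<^sub>R z)"
  by (auto simp: proj_def)

lemma proj_eq_iff:
  assumes "z \<noteq> 0"
  shows "proj z = proj w \<longleftrightarrow> (\<exists>c. c \<noteq> 0 \<and> z = c *\<^sub>R w)"
proof
  assume "proj z = proj w"
  then show "\<exists>c. c \<noteq> 0 \<and> z = c *\<^sub>R w"
    by (metis mem_proj scaleR_one one_neq_zero)
next
  assume "\<exists>c. c \<noteq> 0 \<and> z = c *\<^sub>R w"
  then obtain c where c: "c \<noteq> 0" "z = c *\<^sub>R w"
    by blast
  have "d *\<^sub>R z = (d * c) *\<^sub>R w" "d *\<^sub>R w = (d / c) *\<^sub>R z" for d
    using c by simp_all
  then show "proj z = proj w"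
    using c(1) unfolding proj_def by (metis (full_types) divide_eq_0_iff mult_eq_0_iff)
qed

lemma proj_scaleR: "c \<noteq> 0 \<Longrightarrow> proj (c *\<^sub>R w) = proj w"
  by (cases "w = 0") (auto simp: proj_eq_iff)

lemma proj_uminus: "proj (- w) = proj w"
  using proj_scaleR[of "-1" w] by simp

lemma act_proj: "act g (proj y) = proj (g *v y)"
proof -
  have "proj x = (\<lambda>c. c *\<^sub>R x) ` {c. c \<noteq> 0}" for x
    by (auto simp: proj_def)
  then show ?thesis
    unfolding act_def by (simp add: image_image matrix_vector_mult_scaleR)
qed

lemma proj_in_proj_image_cone_iff:
  assumes cone: "\<And>x c. x \<in> A \<Longrightarrow> c > 0 \<Longrightarrow> c *\<^sub>R x \<in> A" and "z \<noteq> 0"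
  shows "proj z \<in> proj ` (A - {0}) \<longleftrightarrow> z \<in> A \<or> -z \<in> A"
proof
  assume "proj z \<in> proj ` (A - {0})"
  then obtain w where "w \<in> A" "proj z = proj w"
    by auto
  then obtain c where "c \<noteq> 0" "z = c *\<^sub>R w"
    using proj_eq_iff[OF \<open>z \<noteq> 0\<close>] by auto
  with \<open>w \<in> A\<close> show "z \<in> A \<or> -z \<in> A"
    using cone[of w c] cone[of w "-c"] by (cases "c > 0") auto
next
  assume "z \<in> A \<or> -z \<in> A"
  then show "proj z \<in> proj ` (A - {0})"
    using \<open>z \<noteq> 0\<close> proj_uminus[of z] by (metis Diff_iff image_eqI neg_equal_0_iff_equal singletonD)
qed

lemma istopology_P1: "istopology (\<lambda>U. U \<subseteq> P1 \<and> open {z. z \<noteq> 0 \<and> proj z \<in> U})"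
proof -
  have "{z. z \<noteq> 0 \<and> proj z \<in> S \<inter> T} = {z. z \<noteq> 0 \<and> proj z \<in> S} \<inter> {z. z \<noteq> 0 \<and> proj z \<in> T}"
    and "{z. z \<noteq> 0 \<and> proj z \<in> \<Union>K} = (\<Union>U\<in>K. {z. z \<noteq> 0 \<and> proj z \<in> U})"
    for S T K
    by auto
  then show ?thesis
    unfolding istopology_def by auto
qed

lemma openin_P1_top: "openin P1_top U \<longleftrightarrow> U \<subseteq> P1 \<and> open {z. z \<noteq> 0 \<and> proj z \<in> U}"
  unfolding P1_top_def topology_inverse'[OF istopology_P1] ..

lemma topspace_P1_top: "topspace P1_top = P1"
proof -
  have "{z. z \<noteq> 0 \<and> proj z \<in> P1} = - {0}"
    by (auto simp: P1_def)
  then have "openin P1_top P1"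
    by (simp add: openin_P1_top open_Compl)
  then show ?thesis
    by (auto simp: openin_P1_top topspace_def)
qed

lemma continuous_map_proj: "continuous_map (top_of_set (- {0})) P1_top proj"
proof -
  have "openin (top_of_set (- {0})) {z \<in> - {0}. proj z \<in> U}" if "openin P1_top U" for U
    using that by (intro open_subset) (auto simp: openin_P1_top)
  then show ?thesis
    by (auto simp: continuous_map_def topspace_P1_top P1_def)
qed

lemma openin_P1_top_proj_image:
  assumes "open A" "\<And>x c. x \<in> A \<Longrightarrow> c > 0 \<Longrightarrow> c *\<^sub>R x \<in> A"
  shows "openin P1_top (proj ` (A - {0}))"
proof -
  have "{z. z \<noteq> 0 \<and> proj z \<in> proj ` (A - {0})} = (A \<union> uminus ` A) - {0}"
    using proj_in_proj_image_cone_iff[OF assms(2)] by (auto simp: image_iff) (metis minus_minus)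
  moreover have "open ((A \<union> uminus ` A) - {0})"
    using assms(1) by (intro open_Diff open_Un open_negations) auto
  ultimately show ?thesis
    by (auto simp: openin_P1_top P1_def)
qed

lemma closedin_P1_top_proj_image:
  assumes "closed A" "\<And>x c. x \<in> A \<Longrightarrow> c > 0 \<Longrightarrow> c *\<^sub>R x \<in> A"
  shows "closedin P1_top (proj ` (A - {0}))"
proof -
  have "z \<noteq> 0 \<and> proj z \<in> P1 - proj ` (A - {0}) \<longleftrightarrow> z \<notin> A \<union> uminus ` A \<union> {0}" for z
  proof (cases "z = 0")
    case False
    have "z \<in> uminus ` A \<longleftrightarrow> -z \<in> A"
      by force
    then show ?thesis
      using proj_in_proj_image_cone_iff[OF assms(2) False] False by (auto simp: P1_def)
  qed simp
  then have "{z. z \<noteq> 0 \<and> proj z \<in> P1 - proj ` (A - {0})} = - (A \<union> uminus ` A \<union> {0})"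
    by blast
  moreover have "closed (A \<union> uminus ` A \<union> {0})"
    using assms(1) by (intro closed_Un closed_negations) auto
  moreover have "proj ` (A - {0}) \<subseteq> P1"
    by (auto simp: P1_def)
  ultimately show ?thesis
    by (simp add: closedin_def topspace_P1_top openin_P1_top open_Compl)
qed

section \<open>The invariant control set\<close>

definition DW :: "(real^2) set set" where
  "DW = proj ` (Wcone - {0})"

lemma C0_eq: "C0 = proj ` (interior Wcone - {0})"
  using zero_notin_interior_Wcone by (simp add: C0_def)

lemma proj_in_DW_iff: "z \<noteq> 0 \<Longrightarrow> proj z \<in> DW \<longleftrightarrow> z \<in> Wcone \<or> -z \<in> Wcone"
  unfolding DW_def by (rule proj_in_proj_image_cone_iff) (auto intro: Wcone_scaleR)

lemma closedin_DW: "closedin P1_top DW"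
  unfolding DW_def using closed_Wcone by (rule closedin_P1_top_proj_image) (auto intro: Wcone_scaleR)

lemma openin_C0: "openin P1_top C0"
  unfolding C0_eq by (rule openin_P1_top_proj_image) (auto intro: interior_Wcone_scaleR)

lemma C0_subset_DW: "C0 \<subseteq> DW"
  unfolding C0_eq DW_def using interior_subset by blast

lemma DW_subset_P1: "DW \<subseteq> P1"
  by (auto simp: DW_def P1_def)

lemma act_SW_DW:
  assumes "g \<in> SW" "x \<in> DW"
  shows "act g x \<in> DW"
proof -
  obtain y where "y \<in> Wcone" "y \<noteq> 0" "x = proj y"
    using assms(2) by (auto simp: DW_def)
  moreover have "g *v y \<in> Wcone"
    using assms(1) \<open>y \<in> Wcone\<close> by (auto simp: SW_def)
  ultimately show ?thesis
    using assms(1) SW_vector_nonzero by (auto simp: DW_def act_proj)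
qed

lemma C0_subset_orbit:
  assumes "x \<in> DW"
  shows "C0 \<subseteq> orbit SW x"
proof
  fix p
  assume "p \<in> C0"
  then obtain w where w: "w \<in> interior Wcone" "p = proj w"
    by (auto simp: C0_def)
  obtain y where y: "y \<in> Wcone" "y \<noteq> 0" "x = proj y"
    using assms by (auto simp: DW_def)
  obtain g c where "g \<in> SW" "c > 0" "g *v y = c *\<^sub>R w"
    using SW_maps_Wcone_to_interior_Wcone y w by blast
  then have "act g x = p"
    using w y by (simp add: act_proj proj_scaleR)
  then show "p \<in> orbit SW x"
    using \<open>g \<in> SW\<close> by (auto simp: orbit_def)
qed

lemma DW_subset_closure_C0: "DW \<subseteq> P1_top closure_of C0"
proof -
  have "(top_of_set (- {0})) closure_of (interior Wcone) = Wcone - {0}"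
    using zero_notin_interior_Wcone closure_interior_Wcone
    by (subst closure_of_subtopology_open) auto
  then have "DW = proj ` ((top_of_set (- {0})) closure_of (interior Wcone))"
    by (simp add: DW_def)
  also have "\<dots> \<subseteq> P1_top closure_of C0"
    unfolding C0_def by (rule continuous_map_image_closure_subset[OF continuous_map_proj])
  finally show ?thesis .
qed

lemma ics_candidate_DW: "ics_candidate SW DW"
  unfolding ics_candidate_def
proof (intro conjI ballI)
  have "C0 \<subseteq> P1_top interior_of DW"
    using C0_subset_DW openin_C0 by (rule interior_of_maximal)
  moreover have "proj e1 \<in> C0"
    using e1_in_interior_Wcone by (simp add: C0_def)
  ultimately show "P1_top interior_of DW \<noteq> {}"
    by auto
  show "DW \<subseteq> P1_top closure_of orbit SW x" if "x \<in> DW" for x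
    using DW_subset_closure_C0 closure_of_mono[OF C0_subset_orbit[OF that]] by blast
qed (use DW_subset_P1 act_SW_DW in auto)

lemma ics_candidate_subset_DW:
  assumes "ics_candidate SW D"
  shows "D \<subseteq> DW"
proof -
  obtain x where x: "x \<in> D"
    using assms interior_of_subset[of P1_top D] by (auto simp: ics_candidate_def)
  then obtain y where y: "y \<noteq> 0" "x = proj y"
    using assms by (auto simp: ics_candidate_def P1_def)
  obtain g where g: "g \<in> SW" "g *v y \<in> Wcone \<or> -(g *v y) \<in> Wcone"
    using SW_maps_into_Wcone_or_negation[OF y(1)] by blast
  have "act g x \<in> DW"
    using g y SW_vector_nonzero proj_in_DW_iff by (simp add: act_proj)
  then have "orbit SW (act g x) \<subseteq> DW"
    using act_SW_DW by (auto simp: orbit_def)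
  then have "P1_top closure_of orbit SW (act g x) \<subseteq> DW"
    using closedin_DW by (rule closure_of_minimal)
  moreover have "act g x \<in> D"
    using assms g x by (auto simp: ics_candidate_def)
  ultimately show ?thesis
    using assms by (auto simp: ics_candidate_def)
qed

lemma invariant_control_set_SW_iff: "invariant_control_set SW D \<longleftrightarrow> D = DW"
proof
  assume "invariant_control_set SW D"
  then show "D = DW"
    using ics_candidate_DW ics_candidate_subset_DW unfolding invariant_control_set_def by blast
qed (use ics_candidate_DW ics_candidate_subset_DW in \<open>auto simp: invariant_control_set_def\<close>)

section \<open>The core\<close>

lemma interior_of_top_of_set_ball:
  fixes S T :: "'a::metric_space set"
  assumes "x \<in> (top_of_set T) interior_of S"
  obtains e where "e > 0" "T \<inter> ball x e \<subseteq> S"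
proof -
  obtain U where "open U" "x \<in> U" "T \<inter> U \<subseteq> S"
    using assms by (auto simp: interior_of_def openin_open)
  then show ?thesis
    using that open_contains_ball[of U] by blast
qed

lemma open_preimage_interior_Wcone: "open {g::real^2^2. g *v v \<in> interior Wcone}"
proof -
  have "continuous_on UNIV (\<lambda>g::real^2^2. g *v v)"
    unfolding matrix_vector_mult_def by (intro continuous_intros)
  then have "open ((\<lambda>g::real^2^2. g *v v) -` interior Wcone)"
    using continuous_on_open_vimage[of UNIV "\<lambda>g::real^2^2. g *v v"] by simp
  then show ?thesis
    by (simp add: vimage_def)
qed

lemma in_interior_of_SW:
  assumes "det g = 1" "g *v vector [1, 1] \<in> interior Wcone" "g *v vector [1, -1] \<in> interior Wcone"
  shows "g \<in> (top_of_set SL2) interior_of SW"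
proof -
  let ?O = "{g. g *v vector [1, 1] \<in> interior Wcone} \<inter> {g. g *v vector [1, -1] \<in> interior Wcone}"
  have "openin (top_of_set SL2) (SL2 \<inter> ?O)"
    using open_preimage_interior_Wcone by (auto simp: openin_open intro!: exI[of _ ?O])
  moreover have "SL2 \<inter> ?O \<subseteq> SW"
    by (auto simp: SW_iff_generators SL2_def dest: subsetD[OF interior_subset])
  ultimately have "SL2 \<inter> ?O \<subseteq> (top_of_set SL2) interior_of SW"
    by (simp add: interior_of_maximal)
  then show ?thesis
    using assms by (auto simp: SL2_def)
qed

text \<open>The witness fixing \<open>[w]\<close> is \<open>c \<cdot> [[w\<^sub>1 + 1, 0], [w\<^sub>2, 1]]\<close>, normalised to determinant 1;
  it maps \<open>w\<close> to \<open>c (w\<^sub>1 + 1) w\<close> and both edges of the cone into its interior.\<close>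

lemma C0_subset_core: "C0 \<subseteq> core SW DW"
proof
  fix x
  assume "x \<in> C0"
  then obtain w where w: "w \<in> interior Wcone" "x = proj w"
    by (auto simp: C0_def)
  have w1: "w$1 > 0" and w2: "\<bar>w$2\<bar> < w$1"
    using w(1) by (auto simp: interior_Wcone_iff)
  define c where "c = 1 / sqrt (w$1 + 1)"
  have c: "c > 0" "c * c * (w$1 + 1) = 1"
    using w1 by (simp_all add: c_def)
  define g where "g = mat2 (c * (w$1 + 1)) 0 (c * w$2) c"
  have in_int: "vector [c * a, c * b] \<in> interior Wcone" if "\<bar>b\<bar> < a" for a b
    using c(1) that by (simp add: interior_Wcone_iff abs_mult)
  have "g *v vector [1, 1] = vector [c * (w$1 + 1), c * (w$2 + 1)]"
    "g *v vector [1, -1] = vector [c * (w$1 + 1), c * (w$2 - 1)]"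
    by (simp_all add: g_def mat2_mult_vector algebra_simps)
  moreover have "\<bar>w$2 + 1\<bar> < w$1 + 1" "\<bar>w$2 - 1\<bar> < w$1 + 1"
    using w2 by linarith+
  moreover have "det g = 1"
    using c(2) by (simp add: g_def algebra_simps)
  ultimately have "g \<in> (top_of_set SL2) interior_of SW"
    using in_int by (intro in_interior_of_SW) simp_all
  moreover have "g *v w = (c * (w$1 + 1)) *\<^sub>R w"
    by (simp add: g_def mat2_mult_vector vec2_eq_iff algebra_simps)
  then have "act g x = x"
    using c(1) w1 w(2) by (simp add: act_proj proj_scaleR)
  moreover have "x \<in> DW"
    using \<open>x \<in> C0\<close> C0_subset_DW by blast
  ultimately show "x \<in> core SW DW"
    unfolding core_def by blast
qed

text \<open>A shear, however small, pushes a boundary ray of the cone out of the cone, while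
  composing an interior element of \<^term>\<open>SW\<close> with a small shear stays in \<^term>\<open>SW\<close>;
  so interior elements cannot fix boundary points.\<close>

lemma shear_boundary_notin_Wcone:
  assumes "y$2 = s * y$1" "\<bar>s\<bar> = 1" "y$1 \<noteq> 0" "t > 0" "l \<noteq> 0"
  shows "mat2 1 0 (t * s) 1 *v (l *\<^sub>R y) \<notin> Wcone"
proof
  let ?k = "l * y$1"
  assume "mat2 1 0 (t * s) 1 *v (l *\<^sub>R y) \<in> Wcone"
  moreover have "mat2 1 0 (t * s) 1 *v (l *\<^sub>R y) = vector [?k, s * ?k * (1 + t)]"
    using assms(1) by (simp add: mat2_mult_vector vec2_eq_iff algebra_simps)
  ultimately have "\<bar>?k\<bar> * (1 + t) \<le> ?k"
    using assms(2) assms(4) by (simp add: Wcone_iff abs_mult)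
  moreover have "\<bar>?k\<bar> < \<bar>?k\<bar> * (1 + t)"
    using assms(3-5) by simp
  ultimately show False
    by linarith
qed

lemma shear_mult_eq:
  "mat2 1 0 t 1 ** g = g + t *\<^sub>R (mat2 0 0 1 0 ** g)"
  by (simp add: vec_eq_iff forall_2 matrix_matrix_mult_def sum_2)

lemma shear_mult_in_SW:
  assumes "g \<in> (top_of_set SL2) interior_of SW" "\<bar>s\<bar> = 1"
  obtains t where "t > 0" "mat2 1 0 (t * s) 1 ** g \<in> SW"
proof -
  obtain e where e: "e > 0" "SL2 \<inter> ball g e \<subseteq> SW"
    using interior_of_top_of_set_ball[OF assms(1)] by blast
  define N where "N = mat2 0 0 1 0 ** g"
  have "norm N + 1 > 0"
    by (simp add: add_nonneg_pos)
  define t where "t = e / (norm N + 1)"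
  have "t > 0"
    using e(1) \<open>norm N + 1 > 0\<close> by (simp add: t_def)
  have "t * norm N < t * (norm N + 1)"
    using \<open>t > 0\<close> by simp
  also have "\<dots> = e"
    using \<open>norm N + 1 > 0\<close> by (simp add: t_def)
  finally have "t * norm N < e" .
  moreover have "mat2 1 0 (t * s) 1 ** g - g = (t * s) *\<^sub>R N"
    by (simp add: shear_mult_eq N_def)
  ultimately have "dist (mat2 1 0 (t * s) 1 ** g) g < e"
    using \<open>t > 0\<close> assms(2) by (simp add: dist_norm abs_mult)
  moreover have "g \<in> SL2"
    using assms(1) interior_of_subset_topspace by fastforce
  then have "mat2 1 0 (t * s) 1 ** g \<in> SL2"
    by (simp add: SL2_def det_mul)
  ultimately show ?thesis
    using that \<open>t > 0\<close> e(2) by (auto simp: dist_commute)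
qed

lemma core_subset_C0: "core SW DW \<subseteq> C0"
proof
  fix x
  assume "x \<in> core SW DW"
  then obtain g where "x \<in> DW" and g: "g \<in> (top_of_set SL2) interior_of SW" and "act g x = x"
    by (auto simp: core_def)
  obtain y where y: "y \<in> Wcone" "y \<noteq> 0" "x = proj y"
    using \<open>x \<in> DW\<close> by (auto simp: DW_def)
  have "g \<in> SL2"
    using g interior_of_subset_topspace by fastforce
  then have "g *v y \<noteq> 0"
    using y(2) matrix_vector_mult_eq_0_imp[of g y] by (auto simp: SL2_def)
  moreover have "proj (g *v y) = proj y"
    using \<open>act g x = x\<close> y(3) by (simp add: act_proj)
  ultimately obtain l where l: "l \<noteq> 0" "g *v y = l *\<^sub>R y"
    using proj_eq_iff by blast
  show "x \<in> C0"
  proof (rule ccontr)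
    assume "x \<notin> C0"
    then have "y \<notin> interior Wcone"
      using y(3) by (auto simp: C0_def)
    then have "\<bar>y$2\<bar> = y$1"
      using y(1) by (simp add: Wcone_iff interior_Wcone_iff)
    have y1: "y$1 \<noteq> 0"
      using Wcone_nth_1_pos y(1,2) by fastforce
    define s where "s = y$2 / y$1"
    have s: "y$2 = s * y$1" "\<bar>s\<bar> = 1"
      using y1 \<open>\<bar>y$2\<bar> = y$1\<close> by (simp_all add: s_def abs_div)
    obtain t where "t > 0" "mat2 1 0 (t * s) 1 ** g \<in> SW"
      using shear_mult_in_SW[OF g s(2)] by blast
    then have "mat2 1 0 (t * s) 1 *v (l *\<^sub>R y) \<in> Wcone"
      using y(1) l(2) by (auto simp: SW_def matrix_vector_mul_assoc[symmetric])
    then show False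
      using shear_boundary_notin_Wcone[OF s y1 \<open>t > 0\<close> l(1)] by simp
  qed
qed

lemma core_DW: "core SW DW = C0"
  using C0_subset_core core_subset_C0 by blast

section \<open>Norm estimates\<close>

text \<open>In the coordinates \<open>p = g\<^sub>1\<^sub>1 + g\<^sub>1\<^sub>2\<close>, \<open>q = g\<^sub>1\<^sub>1 - g\<^sub>1\<^sub>2\<close> (and likewise for the second row)
  the determinant condition reads \<open>p\<^sub>2 q\<^sub>1 - p\<^sub>1 q\<^sub>2 = 2\<close>, while the cone condition bounds
  \<open>|p\<^sub>2| \<le> p\<^sub>1\<close>, \<open>|q\<^sub>2| \<le> q\<^sub>1\<close>; hence \<open>p\<^sub>1 q\<^sub>1 \<ge> 1\<close> and AM-GM gives \<open>p\<^sub>1 + q\<^sub>1 \<ge> 2\<close>.\<close>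

lemma SW_nth_1_1_ge_1:
  assumes "g \<in> SW"
  shows "g$1$1 \<ge> 1"
proof -
  define p1 where "p1 = g$1$1 + g$1$2"
  define q1 where "q1 = g$1$1 - g$1$2"
  define p2 where "p2 = g$2$1 + g$2$2"
  define q2 where "q2 = g$2$1 - g$2$2"
  have det: "g$1$1 * g$2$2 - g$1$2 * g$2$1 = 1" and p: "\<bar>p2\<bar> \<le> p1" and q: "\<bar>q2\<bar> \<le> q1"
    using assms unfolding SW_iff_mat2[of g] mat2_in_SW_iff p1_def q1_def p2_def q2_def by auto
  have "p2 * q1 - p1 * q2 = 2"
    using det unfolding p1_def q1_def p2_def q2_def by algebra
  moreover have "p2 * q1 \<le> p1 * q1"
    using p q by (intro mult_right_mono) auto
  moreover have "p1 * (- q2) \<le> p1 * q1"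
    using p q by (intro mult_left_mono) auto
  ultimately have "p1 * q1 \<ge> 1"
    by linarith
  moreover have "(p1 + q1)\<^sup>2 = (p1 - q1)\<^sup>2 + 4 * (p1 * q1)"
    by (simp add: power2_eq_square algebra_simps)
  ultimately have "4 \<le> (p1 + q1)\<^sup>2"
    using zero_le_power2[of "p1 - q1"] by linarith
  then have "p1 + q1 \<ge> 2"
    using power2_le_imp_le[of 2 "p1 + q1"] p q by simp
  then show ?thesis
    by (simp add: p1_def q1_def)
qed

lemma norm_SW_e1_ge_1: "g \<in> SW \<Longrightarrow> norm (g *v e1) \<ge> 1"
  using SW_nth_1_1_ge_1[of g] component_le_norm_cart[of "g *v e1" 1]
  by (simp add: matrix_vector_mult_nth_2)

lemma rho_scaleR: "c \<noteq> 0 \<Longrightarrow> rho g (c *\<^sub>R z) = rho g z"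
  by (simp add: rho_def matrix_vector_mult_scaleR)

lemma rho_ge_0: "rho g z \<ge> 0"
  by (simp add: rho_def)

lemma rho_C0_lower_bound:
  assumes "z \<noteq> 0" "proj z \<in> C0"
  obtains h where "h \<in> SW" "proj z = act h (proj e1)" "onorm (\<lambda>x. h *v x) > 0"
    "\<And>g. g \<in> SW \<Longrightarrow> rho g z \<ge> 1 / onorm (\<lambda>x. h *v x)"
proof -
  obtain w where w: "w \<in> interior Wcone" "proj z = proj w"
    using assms(2) by (auto simp: C0_def)
  obtain h t where h: "h \<in> SW" "t > 0" "h *v e1 = t *\<^sub>R w"
    using SW_maps_e1_to_interior_Wcone[OF w(1)] by blast
  have "h *v e1 \<noteq> 0"
    using h(1) SW_vector_nonzero by (simp add: vec2_eq_iff)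
  have "proj z = act h (proj e1)"
    using w h zero_notin_interior_Wcone by (auto simp: act_proj proj_scaleR)
  then obtain c where c: "c \<noteq> 0" "z = c *\<^sub>R (h *v e1)"
    using proj_eq_iff[OF assms(1)] by (auto simp: act_proj)
  have "norm (h *v e1) \<le> onorm (\<lambda>x. h *v x)"
    using onorm[OF matrix_vector_mul_bounded_linear[of h], of e1] by simp
  moreover have "norm (h *v e1) > 0"
    using \<open>h *v e1 \<noteq> 0\<close> by simp
  ultimately have on: "onorm (\<lambda>x. h *v x) > 0"
    by linarith
  have "rho g z \<ge> 1 / onorm (\<lambda>x. h *v x)" if "g \<in> SW" for g
  proof -
    have "1 / onorm (\<lambda>x. h *v x) \<le> 1 / norm (h *v e1)"
      using \<open>norm (h *v e1) > 0\<close> \<open>norm (h *v e1) \<le> _\<close> by (simp add: frac_le)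
    also have "\<dots> \<le> norm ((g ** h) *v e1) / norm (h *v e1)"
      using norm_SW_e1_ge_1[OF SW_mult[OF that h(1)]] \<open>norm (h *v e1) > 0\<close>
      by (simp add: divide_right_mono)
    also have "\<dots> = rho g (h *v e1)"
      by (simp add: rho_def matrix_vector_mul_assoc)
    also have "\<dots> = rho g z"
      using c by (simp add: rho_scaleR)
    finally show ?thesis .
  qed
  then show ?thesis
    using that h(1) \<open>proj z = act h (proj e1)\<close> on by blast
qed

lemma INF_rho_C0_pos:
  assumes "z \<noteq> 0" "proj z \<in> C0"
  shows "(INF g\<in>SW. rho g z) > 0"
proof -
  obtain h where "h \<in> SW" "proj z = act h (proj e1)" "onorm (\<lambda>x. h *v x) > 0"
    and bound: "\<And>g. g \<in> SW \<Longrightarrow> rho g z \<ge> 1 / onorm (\<lambda>x. h *v x)"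
    using rho_C0_lower_bound[OF assms] by metis
  have "(INF g\<in>SW. rho g z) \<ge> 1 / onorm (\<lambda>x. h *v x)"
    using mat_1_in_SW bound by (intro cINF_greatest) auto
  moreover have "1 / onorm (\<lambda>x. h *v x) > 0"
    using \<open>onorm (\<lambda>x. h *v x) > 0\<close> by simp
  ultimately show ?thesis
    by linarith
qed

text \<open>The hyperbolic element \<open>g\<^sub>s\<close> below acts on the edges of the cone by
  \<open>(1, 1) \<mapsto> s (1, 1)\<close> and \<open>(1, -1) \<mapsto> s\<^sup>-\<^sup>1 (1, -1)\<close>; the interior point
  \<open>z = s\<^sup>-\<^sup>2 (1, 1) + (1, -1)\<close> therefore has norm at least 1 while \<open>g\<^sub>s z = (2/s, 0)\<close>.\<close>

lemma rho_SW_C0_arbitrarily_small: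
  assumes "e > 0"
  obtains g z where "g \<in> SW" "z \<noteq> 0" "proj z \<in> C0" "rho g z < e"
proof -
  define s where "s = 1 + 2 / e"
  define g where "g = mat2 ((s + 1/s) / 2) ((s - 1/s) / 2) ((s - 1/s) / 2) ((s + 1/s) / 2)"
  define r where "r = 1 / (s * s)"
  define z :: "real^2" where "z = vector [1 + r, r - 1]"
  have "s \<ge> 1"
    using assms by (simp add: s_def)
  have "s * e = e + 2"
    using assms by (simp add: s_def distrib_right)
  then have "s > 0" "s * s \<ge> 1" "2 / s < e"
    using \<open>s \<ge> 1\<close> assms mult_mono[of 1 s 1 s] by (simp_all add: divide_less_eq mult.commute)
  then have r: "r > 0" "r \<le> 1"
    by (simp_all add: r_def)
  have "1/s \<le> s"
    using \<open>s * s \<ge> 1\<close> \<open>s > 0\<close> by (simp add: divide_le_eq)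
  then have "g \<in> SW"
    using \<open>s > 0\<close> by (simp add: g_def mat2_in_SW_iff field_simps power2_eq_square)
  have "z \<in> interior Wcone"
    using r by (simp add: z_def interior_Wcone_iff)
  then have "z \<noteq> 0" "proj z \<in> C0"
    using zero_notin_interior_Wcone by (auto simp: C0_def)
  have "g *v z = vector [2 / s, 0]"
    using \<open>s > 0\<close> by (simp add: g_def z_def r_def mat2_mult_vector vec2_eq_iff field_simps)
  then have "norm (g *v z) \<le> 2 / s"
    using norm_le_l1_cart[of "g *v z"] \<open>s > 0\<close> by (simp add: sum_2)
  moreover have "norm z \<ge> 1"
    using component_le_norm_cart[of z 1] r by (simp add: z_def)
  then have "rho g z \<le> norm (g *v z)"
    unfolding rho_def by (simp add: divide_le_eq mult_le_cancel_left1)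
  ultimately have "rho g z < e"
    using \<open>2 / s < e\<close> by linarith
  then show ?thesis
    using that \<open>g \<in> SW\<close> \<open>z \<noteq> 0\<close> \<open>proj z \<in> C0\<close> by blast
qed

lemma INF_eq_0_if_nonneg_arbitrarily_small:
  fixes f :: "'a \<Rightarrow> real"
  assumes "\<And>x. x \<in> A \<Longrightarrow> f x \<ge> 0" "\<And>e. e > 0 \<Longrightarrow> \<exists>x\<in>A. f x < e"
  shows "(INF x\<in>A. f x) = 0"
proof -
  have bdd: "bdd_below (f ` A)"
    using assms(1) by (rule bdd_belowI2)
  have "A \<noteq> {}"
    using assms(2)[of 1] by auto
  then have "(INF x\<in>A. f x) \<ge> 0"
    using assms(1) by (intro cINF_greatest) auto
  moreover have "(INF x\<in>A. f x) \<le> e" if e: "e > 0" for e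
  proof -
    obtain x where "x \<in> A" "f x < e"
      using assms(2)[OF e] by blast
    then show ?thesis
      using cINF_lower[OF bdd, of x] by linarith
  qed
  then have "(INF x\<in>A. f x) \<le> 0"
    by (rule field_le_epsilon) simp
  ultimately show ?thesis
    by linarith
qed

lemma INF_rho_SW_C0_eq_0: "(INF p\<in>SW \<times> {z. z \<noteq> 0 \<and> proj z \<in> C0}. rho (fst p) (snd p)) = 0"
proof (rule INF_eq_0_if_nonneg_arbitrarily_small)
  fix e :: real
  assume "e > 0"
  then obtain g z where "g \<in> SW" "z \<noteq> 0" "proj z \<in> C0" "rho g z < e"
    by (rule rho_SW_C0_arbitrarily_small)
  then show "\<exists>p\<in>SW \<times> {z. z \<noteq> 0 \<and> proj z \<in> C0}. rho (fst p) (snd p) < e"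
    by force
qed (rule rho_ge_0)

theorem mainTheorem6:
  shows "(\<exists>!D. invariant_control_set SW D)
    \<and> (\<forall>D. invariant_control_set SW D \<longrightarrow> core SW D = C0)
    \<and> (\<forall>g\<in>SW. norm (g *v e1) \<ge> 1/2)
    \<and> (\<forall>z. z \<noteq> 0 \<and> proj z \<in> C0 \<longrightarrow>
         (\<exists>h\<in>SW. proj z = act h (proj e1) \<and>
              (\<forall>g\<in>SW. rho g z \<ge> 1 / (2 * onorm (\<lambda>x. h *v x))))
         \<and> (INF g\<in>SW. rho g z) > 0)
    \<and> (INF p\<in>SW \<times> {z. z \<noteq> 0 \<and> proj z \<in> C0}. rho (fst p) (snd p)) = 0"
proof (intro conjI allI impI ballI)
  show "\<exists>!D. invariant_control_set SW D"
    using invariant_control_set_SW_iff by auto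
  show "core SW D = C0" if "invariant_control_set SW D" for D
    using that invariant_control_set_SW_iff core_DW by simp
  show "norm (g *v e1) \<ge> 1/2" if "g \<in> SW" for g
    using norm_SW_e1_ge_1[OF that] by simp
  fix z :: "real^2"
  assume z: "z \<noteq> 0 \<and> proj z \<in> C0"
  obtain h where h: "h \<in> SW" "proj z = act h (proj e1)" "onorm (\<lambda>x. h *v x) > 0"
    "\<And>g. g \<in> SW \<Longrightarrow> rho g z \<ge> 1 / onorm (\<lambda>x. h *v x)"
    using z rho_C0_lower_bound by metis
  have "1 / (2 * onorm (\<lambda>x. h *v x)) \<le> 1 / onorm (\<lambda>x. h *v x)"
    using h(3) by (simp add: frac_le)
  then show "\<exists>h\<in>SW. proj z = act h (proj e1)
      \<and> (\<forall>g\<in>SW. rho g z \<ge> 1 / (2 * onorm (\<lambda>x. h *v x)))"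
    using h by (meson order.trans)
  show "(INF g\<in>SW. rho g z) > 0"
    using z INF_rho_C0_pos by blast
qed (rule INF_rho_SW_C0_eq_0)

end
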